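(* Let $f_{1,\infty}=\{f_n\}_{n=1}^\infty$ be a periodic sequence of continuous maps $f_n:[0,1]\to[0,1]$ (i.e. there is $k\in\mathbb{N}$ with $f_{j+kl}=f_j$ for all $l\in\mathbb{N}$, $1\le j\le k$). If $([0,1],f_{1,\infty})$ is multi-transitive, then it is strongly multi-sensitive.
   Context: Use the usual metric $d$ on $[0,1]$. Write $f_i^n=f_{n+i-1}\circ\cdots\circ f_i$, $f_i^0=\mathrm{id}$, and $f_{1,\infty}^{[k]}=\{f^k_{k(n-1)+1}\}_{n=1}^\infty$ (its $n$-fold composition from index $1$ is $f_1^{kn}$). The system is multi-transitive if for every $m\in\mathbb{N}$ and all nonempty open $U_1,\dots,U_m,V_1,\dots,V_m$ there is $k\in\mathbb{N}$ with $f_1^{ik}(U_i)\cap V_i\ne\varnothing$ for each $i=1,\dots,m$. For $V\subseteq X$, $\delta>0$: $N_{f_{1,\infty}}(V,\delta)=\{n\in\mathbb{N}:\exists u,v\in V,\ d(f_1^n(u),f_1^n(v))>\delta\}$. For $\mathbf{v}=(v_1,\dots,v_r)\in\mathbb{N}^r$, the system is multi-sensitive with respect to $\mathbf{v}$ if there is $\delta>0$ such that $\bigcap_{i=1}^r N_{f_{1,\infty}^{[v_i]}}(U_i,\delta)\ne\varnothing$ for all nonempty open $U_1,\dots,U_r$; it is strongly multi-sensitive if it is multi-sensitive with respect to every vector in $\mathbb{N}^r$, for every $r\in\mathbb{N}$. *)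

theory Defs
  imports "HOL-Analysis.Analysis"
begin

text \<open>A non-autonomous system on [0,1] is a sequence f :: nat => real => real indexed from 1
  (the value f 0 is never used).\<close>

fun comp_seq :: "(nat \<Rightarrow> real \<Rightarrow> real) \<Rightarrow> nat \<Rightarrow> nat \<Rightarrow> real \<Rightarrow> real" where
  "comp_seq f i 0 = id"
| "comp_seq f i (Suc n) = f (i + n) \<circ> comp_seq f i n"

definition block_sys :: "nat \<Rightarrow> (nat \<Rightarrow> real \<Rightarrow> real) \<Rightarrow> nat \<Rightarrow> real \<Rightarrow> real" where
  "block_sys k f n = comp_seq f (k * (n - 1) + 1) k"

definition unit_iv :: "real set" where "unit_iv = {0..1}"

definition nonempty_open :: "real set \<Rightarrow> bool" where
  "nonempty_open U \<longleftrightarrow> openin (top_of_set unit_iv) U \<and> U \<noteq> {}"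

definition cont_seq :: "(nat \<Rightarrow> real \<Rightarrow> real) \<Rightarrow> bool" where
  "cont_seq f \<longleftrightarrow> (\<forall>n\<ge>1. continuous_on unit_iv (f n) \<and> f n ` unit_iv \<subseteq> unit_iv)"

definition periodic_seq :: "(nat \<Rightarrow> real \<Rightarrow> real) \<Rightarrow> bool" where
  "periodic_seq f \<longleftrightarrow> (\<exists>k\<ge>1. \<forall>l\<ge>1. \<forall>j\<in>{1..k}. f (j + k * l) = f j)"

definition multi_transitive :: "(nat \<Rightarrow> real \<Rightarrow> real) \<Rightarrow> bool" where
  "multi_transitive f \<longleftrightarrow>
    (\<forall>m\<ge>1. \<forall>U V :: nat \<Rightarrow> real set.
       (\<forall>i\<in>{1..m}. nonempty_open (U i) \<and> nonempty_open (V i)) \<longrightarrow>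
       (\<exists>k\<ge>1. \<forall>i\<in>{1..m}. comp_seq f 1 (i * k) ` U i \<inter> V i \<noteq> {}))"

definition N_set :: "(nat \<Rightarrow> real \<Rightarrow> real) \<Rightarrow> real set \<Rightarrow> real \<Rightarrow> nat set" where
  "N_set f V \<delta> = {n. n \<ge> 1 \<and> (\<exists>u\<in>V. \<exists>v\<in>V. dist (comp_seq f 1 n u) (comp_seq f 1 n v) > \<delta>)}"

definition multi_sensitive :: "(nat \<Rightarrow> real \<Rightarrow> real) \<Rightarrow> nat \<Rightarrow> (nat \<Rightarrow> nat) \<Rightarrow> bool" where
  "multi_sensitive f r v \<longleftrightarrow>
    (\<exists>\<delta>>0. \<forall>U :: nat \<Rightarrow> real set. (\<forall>i\<in>{1..r}. nonempty_open (U i)) \<longrightarrow>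
        (\<Inter>i\<in>{1..r}. N_set (block_sys (v i) f) (U i) \<delta>) \<noteq> {})"

definition strongly_multi_sensitive :: "(nat \<Rightarrow> real \<Rightarrow> real) \<Rightarrow> bool" where
  "strongly_multi_sensitive f \<longleftrightarrow>
    (\<forall>r\<ge>1. \<forall>v :: nat \<Rightarrow> nat. (\<forall>i\<in>{1..r}. v i \<ge> 1) \<longrightarrow> multi_sensitive f r v)"

end

(*
  Let p be a period of the sequence and F = f_1^p, so that f_1^(pt) = F^t. Choosing all but
  one pair of open sets to be [0,1], multi-transitivity makes every iterate F^N transitive.
  Such an interval map moves some point down and some point up, hence has a fixed point z in
  (0,1). The images F^t(J) of an open interval J form connected sets that eventually contain z;
  a later time at which F^t(J) also reaches below z/2 gives [z/2,z] within F^t(J), at a time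
  that may be prescribed to lie in any progression N, 2N, 3N, ... Applied to J inside [z/2,z]
  this yields [z/2,z] within F^s([z/2,z]) for some s, so every open set is stretched over
  [z/2,z] at all large multiples of s. A single large multiple n of ps then separates two
  points of each U_i by z/4 under f_1^(v_i n), for all block systems at once.
*)
theory Submission
  imports Defs
begin

lemma comp_seq_add: "comp_seq f i (m + n) = comp_seq f (i + m) n \<circ> comp_seq f i m"
  by (induction n) (auto simp: add.assoc)

lemma comp_seq_block_sys: "comp_seq (block_sys k f) 1 n = comp_seq f 1 (k * n)"
proof (induction n)
  case (Suc n)
  have "comp_seq f 1 (k * Suc n) = comp_seq f (1 + k * n) k \<circ> comp_seq f 1 (k * n)"
    using comp_seq_add[of f 1 "k * n" k] by (simp add: add.commute)
  then show ?case using Suc by (simp add: block_sys_def add.commute)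
qed simp

lemma comp_seq_continuous_self_map:
  assumes "cont_seq f" "i \<ge> 1"
  shows "continuous_on {0..1} (comp_seq f i n) \<and> comp_seq f i n ` {0..1} \<subseteq> {0..1}"
proof (induction n)
  case (Suc n)
  have f: "continuous_on {0..1} (f (i + n))" "f (i + n) ` {0..1} \<subseteq> {0..1}"
    using assms unfolding cont_seq_def unit_iv_def by auto
  have "continuous_on {0..1} (f (i + n) \<circ> comp_seq f i n)"
    by (rule continuous_on_compose) (use Suc f in \<open>auto intro: continuous_on_subset\<close>)
  moreover have "(f (i + n) \<circ> comp_seq f i n) ` {0..1} \<subseteq> {0..1}"
    using Suc f by (auto simp: image_subset_iff)
  ultimately show ?case by simp
qed (simp add: continuous_on_id)

lemma periodic_seq_shift:
  assumes "periodic_seq f"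
  obtains p where "p \<ge> 1" "\<And>i. i \<ge> 1 \<Longrightarrow> f (i + p) = f i"
proof -
  obtain p where p: "p \<ge> 1" and per: "\<And>l j. l \<ge> 1 \<Longrightarrow> j \<in> {1..p} \<Longrightarrow> f (j + p * l) = f j"
    using assms unfolding periodic_seq_def by auto
  have "f (i + p) = f i" if "i \<ge> 1" for i
  proof -
    define j where "j = (i - 1) mod p + 1"
    define l where "l = (i - 1) div p"
    have i: "i = j + p * l"
      using that mult_div_mod_eq[of p "i - 1"] unfolding j_def l_def by linarith
    have j: "j \<in> {1..p}"
      using p unfolding j_def by (simp add: Suc_leI)
    have "f (i + p) = f j"
      using per[of "l + 1" j] i j by (simp add: algebra_simps)
    moreover have "f i = f j"
      using per[of l j] i j by (cases "l = 0") auto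
    ultimately show ?thesis by simp
  qed
  then show thesis using p that by blast
qed

lemma comp_seq_shift_period:
  assumes per: "\<And>i. i \<ge> 1 \<Longrightarrow> f (i + p) = f i" and "i \<ge> 1"
  shows "comp_seq f (i + p * t) n = comp_seq f i n"
proof -
  have shift: "f (j + p * t) = f j" if "j \<ge> 1" for j
  proof (induction t)
    case (Suc t)
    have "f (j + p * Suc t) = f (j + p * t + p)"
      by (simp add: algebra_simps)
    then show ?case
      using Suc per[of "j + p * t"] \<open>j \<ge> 1\<close> by simp
  qed simp
  show ?thesis
  proof (induction n)
    case (Suc n)
    have "f (i + p * t + n) = f (i + n)"
      using shift[of "i + n"] \<open>i \<ge> 1\<close> by (simp add: algebra_simps)
    then show ?case
      using Suc by simp
  qed simp
qed

lemma comp_seq_mult_period: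
  assumes "\<And>i. i \<ge> 1 \<Longrightarrow> f (i + p) = f i"
  shows "comp_seq f 1 (p * t) = comp_seq f 1 p ^^ t"
proof (induction t)
  case (Suc t)
  have "comp_seq f 1 (p * Suc t) = comp_seq f (1 + p * t) p \<circ> comp_seq f 1 (p * t)"
    using comp_seq_add[of f 1 "p * t" p] by (simp add: add.commute)
  then show ?case
    using Suc comp_seq_shift_period[of f p 1 t p] assms by simp
qed simp

lemma nonempty_open_subset: "nonempty_open U \<Longrightarrow> U \<subseteq> {0..1}"
  unfolding nonempty_open_def unit_iv_def by (auto dest: openin_imp_subset)

lemma nonempty_open_Int_open:
  "open S \<Longrightarrow> x \<in> S \<Longrightarrow> x \<in> {0..1} \<Longrightarrow> nonempty_open ({0..1} \<inter> S)"
  unfolding nonempty_open_def unit_iv_def by auto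

lemma nonempty_open_contains_connected:
  assumes "nonempty_open U"
  obtains J where "J \<subseteq> U" "nonempty_open J" "connected J"
proof -
  obtain x where x: "x \<in> U"
    using assms unfolding nonempty_open_def by auto
  then obtain e where e: "e > 0" "\<And>y. y \<in> {0..1} \<Longrightarrow> dist y x < e \<Longrightarrow> y \<in> U"
    using assms unfolding nonempty_open_def unit_iv_def openin_euclidean_subtopology_iff by blast
  have "{0..1} \<inter> ball x e \<subseteq> U"
    using e by (auto simp: dist_commute)
  moreover have "nonempty_open ({0..1} \<inter> ball x e)"
    using x e(1) nonempty_open_subset[OF assms] by (intro nonempty_open_Int_open[where x = x]) auto
  moreover have "connected ({0..1} \<inter> ball x e)"
    by (intro convex_connected convex_Int convex_ball) (simp add: convex_real_interval)
  ultimately show thesis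
    using that by blast
qed

lemma funpow_increasing_on:
  fixes F :: "'a::order \<Rightarrow> 'a"
  assumes "\<And>a. a \<in> S \<Longrightarrow> F a \<in> S \<and> a \<le> F a" "x \<in> S"
  shows "(F ^^ k) x \<in> S \<and> x \<le> (F ^^ k) x"
proof (induction k)
  case (Suc k)
  then show ?case
    using assms(1)[of "(F ^^ k) x"] by (auto dest: order_trans)
qed (use assms(2) in simp)

lemma funpow_decreasing_on:
  fixes F :: "'a::order \<Rightarrow> 'a"
  assumes "\<And>a. a \<in> S \<Longrightarrow> F a \<in> S \<and> F a \<le> a" "x \<in> S"
  shows "(F ^^ k) x \<in> S \<and> (F ^^ k) x \<le> x"
proof (induction k)
  case (Suc k)
  then show ?case
    using assms(1)[of "(F ^^ k) x"] by (auto dest: order_trans)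
qed (use assms(2) in simp)

locale totally_transitive_interval_map =
  fixes F :: "real \<Rightarrow> real"
  assumes continuous: "continuous_on {0..1} F"
    and self_map: "F ` {0..1} \<subseteq> {0..1}"
    and transitive_iterates: "\<And>N U V. N \<ge> 1 \<Longrightarrow> nonempty_open U \<Longrightarrow> nonempty_open V \<Longrightarrow>
      \<exists>k\<ge>1. (F ^^ (N * k)) ` U \<inter> V \<noteq> {}"
begin

lemma funpow_continuous_self_map:
  "continuous_on {0..1} (F ^^ t) \<and> (F ^^ t) ` {0..1} \<subseteq> {0..1}"
proof (induction t)
  case (Suc t)
  have "continuous_on {0..1} (F \<circ> F ^^ t)"
    by (rule continuous_on_compose) (use Suc continuous in \<open>auto intro: continuous_on_subset\<close>)
  moreover have "(F \<circ> F ^^ t) ` {0..1} \<subseteq> {0..1}"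
    using Suc self_map by (auto simp: image_subset_iff)
  ultimately show ?case by simp
qed (simp add: continuous_on_id)

lemma connected_funpow_image: "J \<subseteq> {0..1} \<Longrightarrow> connected J \<Longrightarrow> connected ((F ^^ t) ` J)"
  by (rule connected_continuous_image)
    (use funpow_continuous_self_map in \<open>auto intro: continuous_on_subset\<close>)

lemma exists_point_moved_down: "\<exists>a\<in>{0<..1}. F a < a"
proof (rule ccontr)
  assume no_down: "\<not> ?thesis"
  have up: "F a \<in> {0<..1} \<and> a \<le> F a" if "a \<in> {0<..1}" for a
  proof -
    have "F a \<in> {0..1}"
      using self_map that by (force simp: image_subset_iff)
    moreover have "a \<le> F a"
      using no_down that by (meson not_less)
    ultimately show ?thesis
      using that by auto
  qed
  have opens: "nonempty_open ({0..1} \<inter> {1/2<..})" "nonempty_open ({0..1} \<inter> {..<1/4})"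
    by (rule nonempty_open_Int_open[where x = 1], auto)
       (rule nonempty_open_Int_open[where x = 0], auto)
  then obtain k where "(F ^^ (1 * k)) ` ({0..1} \<inter> {1/2<..}) \<inter> ({0..1} \<inter> {..<1/4}) \<noteq> {}"
    using transitive_iterates[OF order.refl opens] by auto
  then obtain x where "x \<in> {0<..1}" "1/2 < x" "(F ^^ k) x < 1/4"
    by auto
  then show False
    using funpow_increasing_on[OF up, of x k] by simp
qed

lemma exists_point_moved_up: "\<exists>b\<in>{0..<1}. b < F b"
proof (rule ccontr)
  assume no_up: "\<not> ?thesis"
  have down: "F b \<in> {0..<1} \<and> F b \<le> b" if "b \<in> {0..<1}" for b
  proof -
    have "F b \<in> {0..1}"
      using self_map that by (force simp: image_subset_iff)
    moreover have "F b \<le> b"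
      using no_up that by (meson not_less)
    ultimately show ?thesis
      using that by auto
  qed
  have opens: "nonempty_open ({0..1} \<inter> {..<1/2})" "nonempty_open ({0..1} \<inter> {3/4<..})"
    by (rule nonempty_open_Int_open[where x = 0], auto)
       (rule nonempty_open_Int_open[where x = 1], auto)
  then obtain k where "(F ^^ (1 * k)) ` ({0..1} \<inter> {..<1/2}) \<inter> ({0..1} \<inter> {3/4<..}) \<noteq> {}"
    using transitive_iterates[OF order.refl opens] by auto
  then obtain x where "x \<in> {0..<1}" "x < 1/2" "3/4 < (F ^^ k) x"
    by auto
  then show False
    using funpow_decreasing_on[OF down, of x k] by simp
qed

lemma interior_fixed_point: "\<exists>z\<in>{0<..<1}. F z = z"
proof -
  obtain a where a: "a \<in> {0<..1}" "F a < a"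
    using exists_point_moved_down by blast
  obtain b where b: "b \<in> {0..<1}" "b < F b"
    using exists_point_moved_up by blast
  define g where "g y = F y - y" for y
  have "continuous_on {min a b..max a b} g"
    unfolding g_def using a b
    by (intro continuous_intros continuous_on_subset[OF continuous]) auto
  then have "connected (g ` {min a b..max a b})"
    by (rule connected_continuous_image) simp
  moreover have "g a \<in> g ` {min a b..max a b}" "g b \<in> g ` {min a b..max a b}" "g a < 0" "0 < g b"
    using a b unfolding g_def by auto
  ultimately have "0 \<in> g ` {min a b..max a b}"
    unfolding connected_iff_interval by (meson less_imp_le)
  then obtain z where z: "z \<in> {min a b..max a b}" "F z = z"
    unfolding g_def by auto
  then have "z \<noteq> a" "z \<noteq> b"
    using a b by auto
  then show ?thesis
    using a b z by (intro bexI[of _ z]) auto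
qed

lemma fixed_point_in_image:
  assumes z: "F z = z" "z \<in> {0<..<1}" and J: "nonempty_open J" "connected J"
  obtains t where "z \<in> (F ^^ t) ` J"
proof -
  have J01: "J \<subseteq> {0..1}"
    using J(1) by (rule nonempty_open_subset)
  obtain n x0 where n: "n \<ge> 1" "x0 \<in> J" "(F ^^ n) x0 \<in> J"
    using transitive_iterates[OF order.refl J(1) J(1)] by auto
  define H where "H M = (\<Union>j\<le>M. (F ^^ (n * j)) ` J)" for M
  \<comment> \<open>consecutive members of the union meet in the point \<open>(F ^^ (n * M)) ((F ^^ n) x0)\<close>\<close>
  have connected_H: "connected (H M)" for M
  proof (induction M)
    case (Suc M)
    have "(F ^^ (n * M)) ((F ^^ n) x0) \<in> H M"
      using n unfolding H_def by auto
    moreover have "(F ^^ (n * Suc M)) x0 = (F ^^ (n * M)) ((F ^^ n) x0)"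
      by (simp only: mult_Suc_right add.commute[of n] funpow_add comp_apply)
    then have "(F ^^ (n * M)) ((F ^^ n) x0) \<in> (F ^^ (n * Suc M)) ` J"
      using n(2) by (metis image_eqI)
    ultimately show ?case
      unfolding H_def atMost_Suc UN_insert
      by (intro connected_Un connected_funpow_image J01 J(2) Suc[unfolded H_def]) blast
  qed (simp add: H_def J(2))
  have left: "nonempty_open ({0..1} \<inter> {..<z})" and right: "nonempty_open ({0..1} \<inter> {z<..})"
    by (rule nonempty_open_Int_open[where x = 0], use z in auto)
      (rule nonempty_open_Int_open[where x = 1], use z in auto)
  obtain k1 a where a: "a \<in> (F ^^ (n * k1)) ` J" "a < z"
    using transitive_iterates[OF n(1) J(1) left] by auto
  obtain k2 b where b: "b \<in> (F ^^ (n * k2)) ` J" "z < b"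
    using transitive_iterates[OF n(1) J(1) right] by auto
  have "a \<in> H (max k1 k2)" "b \<in> H (max k1 k2)"
    using a(1) b(1) unfolding H_def by auto
  then have "z \<in> H (max k1 k2)"
    using connected_H a(2) b(2) unfolding connected_iff_interval by (meson less_imp_le)
  then show thesis
    using that unfolding H_def by blast
qed

lemma eventually_fixed_point_in_image:
  assumes z: "F z = z" "z \<in> {0<..<1}" and J: "nonempty_open J" "connected J"
  shows "\<forall>\<^sub>F t in sequentially. z \<in> (F ^^ t) ` J"
proof -
  obtain t0 where t0: "z \<in> (F ^^ t0) ` J"
    using fixed_point_in_image[OF z J] .
  have fixed: "(F ^^ d) z = z" for d
    by (induction d) (simp_all add: z(1))
  show ?thesis
  proof (rule eventually_sequentiallyI)
    fix t assume "t0 \<le> t"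
    then have "(F ^^ t) ` J = (F ^^ (t - t0)) ` (F ^^ t0) ` J"
      by (simp add: image_comp funpow_add[symmetric])
    then show "z \<in> (F ^^ t) ` J"
      using t0 fixed by (metis image_eqI)
  qed
qed

lemma image_covers_below_fixed_point:
  assumes z: "F z = z" "z \<in> {0<..<1}" and J: "nonempty_open J" "connected J" and "N \<ge> 1"
  shows "\<exists>k\<ge>1. {z/2..z} \<subseteq> (F ^^ (N * k)) ` J"
proof -
  obtain T where T: "\<And>t. t \<ge> T \<Longrightarrow> z \<in> (F ^^ t) ` J"
    using eventually_fixed_point_in_image[OF z J] unfolding eventually_sequentially by blast
  have below: "nonempty_open ({0..1} \<inter> {..<z/2})"
    using z by (intro nonempty_open_Int_open[where x = 0]) auto
  have "N * (T + 1) \<ge> 1"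
    using \<open>N \<ge> 1\<close> by simp
  then obtain k where k: "k \<ge> 1" "(F ^^ (N * (T + 1) * k)) ` J \<inter> ({0..1} \<inter> {..<z/2}) \<noteq> {}"
    using transitive_iterates[OF _ J(1) below] by blast
  then obtain y where y: "y \<in> (F ^^ (N * (T + 1) * k)) ` J" "y < z/2"
    by blast
  have "1 * (T + 1) * 1 \<le> N * (T + 1) * k"
    using k(1) \<open>N \<ge> 1\<close> by (intro mult_le_mono) auto
  then have "z \<in> (F ^^ (N * (T + 1) * k)) ` J"
    by (intro T) simp
  then have "{y..z} \<subseteq> (F ^^ (N * (T + 1) * k)) ` J"
    using connected_funpow_image[OF nonempty_open_subset[OF J(1)] J(2)] y(1)
    unfolding connected_iff_interval by (meson atLeastAtMost_iff subsetI)
  moreover have "{z/2..z} \<subseteq> {y..z}"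
    using y(2) by auto
  ultimately have "{z/2..z} \<subseteq> (F ^^ (N * ((T + 1) * k))) ` J"
    by (metis mult.assoc subset_trans)
  then show ?thesis
    using k(1) by (intro exI[of _ "(T + 1) * k"]) simp
qed

lemma eventually_image_covers_below_fixed_point:
  assumes z: "F z = z" "z \<in> {0<..<1}"
  obtains s where "s \<ge> 1"
    "\<And>J. nonempty_open J \<Longrightarrow> connected J \<Longrightarrow>
      \<forall>\<^sub>F m in sequentially. {z/2..z} \<subseteq> (F ^^ (s * m)) ` J"
proof -
  define K where "K = {z/2..z}"
  have IK: "nonempty_open ({0..1} \<inter> {z/2<..<z})"
    using z by (intro nonempty_open_Int_open[where x = "3 * z / 4"]) auto
  have IK_connected: "connected ({0..1} \<inter> {z/2<..<z})"
    by (intro convex_connected convex_Int) (simp_all add: convex_real_interval)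
  obtain s where s: "s \<ge> 1" "K \<subseteq> (F ^^ s) ` ({0..1} \<inter> {z/2<..<z})"
    using image_covers_below_fixed_point[OF z IK IK_connected order.refl] unfolding K_def mult_1 by blast
  have "{0..1} \<inter> {z/2<..<z} \<subseteq> K"
    unfolding K_def by auto
  then have K_expands: "K \<subseteq> (F ^^ s) ` K"
    using s(2) by (meson image_mono subset_trans)
  have K_invariant: "K \<subseteq> (F ^^ (s * m)) ` K" for m
  proof (induction m)
    case (Suc m)
    have "K \<subseteq> (F ^^ (s * m)) ` K"
      by (rule Suc)
    also have "\<dots> \<subseteq> (F ^^ (s * m)) ` (F ^^ s) ` K"
      using K_expands by (rule image_mono)
    also have "\<dots> = (F ^^ (s * Suc m)) ` K"
      by (simp only: mult_Suc_right add.commute[of s] funpow_add image_comp)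
    finally show ?case .
  qed simp
  have eventually_covered: "\<forall>\<^sub>F m in sequentially. K \<subseteq> (F ^^ (s * m)) ` J"
    if J: "nonempty_open J" "connected J" for J
  proof -
    obtain k where k: "K \<subseteq> (F ^^ (s * k)) ` J"
      using image_covers_below_fixed_point[OF z J s(1)] unfolding K_def by blast
    show ?thesis
    proof (rule eventually_sequentiallyI)
      fix m assume "k \<le> m"
      have "K \<subseteq> (F ^^ (s * (m - k))) ` K"
        by (rule K_invariant)
      also have "\<dots> \<subseteq> (F ^^ (s * (m - k))) ` (F ^^ (s * k)) ` J"
        using k by (rule image_mono)
      also have "\<dots> = (F ^^ (s * (m - k) + s * k)) ` J"
        by (simp only: funpow_add image_comp)
      also have "s * (m - k) + s * k = s * m"
        using \<open>k \<le> m\<close> by (simp add: diff_mult_distrib2)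
      finally show "K \<subseteq> (F ^^ (s * m)) ` J" .
    qed
  qed
  show thesis
    using that[OF s(1)] eventually_covered unfolding K_def by blast
qed

lemma eventually_sensitive_along_multiples:
  obtains s \<delta> where "s \<ge> 1" "\<delta> > 0"
    "\<And>U. nonempty_open U \<Longrightarrow> \<forall>\<^sub>F m in sequentially.
      \<exists>u\<in>U. \<exists>w\<in>U. \<delta> < dist ((F ^^ (s * m)) u) ((F ^^ (s * m)) w)"
proof -
  obtain z where z: "F z = z" "z \<in> {0<..<1}"
    using interior_fixed_point by blast
  obtain s where s: "s \<ge> 1" "\<And>J. nonempty_open J \<Longrightarrow> connected J \<Longrightarrow>
      \<forall>\<^sub>F m in sequentially. {z/2..z} \<subseteq> (F ^^ (s * m)) ` J"
    using eventually_image_covers_below_fixed_point[OF z] by blast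
  have sensitive: "\<forall>\<^sub>F m in sequentially.
      \<exists>u\<in>U. \<exists>w\<in>U. z/4 < dist ((F ^^ (s * m)) u) ((F ^^ (s * m)) w)"
    if U: "nonempty_open U" for U
  proof -
    obtain J where J: "J \<subseteq> U" "nonempty_open J" "connected J"
      using nonempty_open_contains_connected[OF U] by blast
    show ?thesis
      using s(2)[OF J(2,3)]
    proof (rule eventually_mono)
      fix m assume covered: "{z/2..z} \<subseteq> (F ^^ (s * m)) ` J"
      have "z \<in> (F ^^ (s * m)) ` J" "z/2 \<in> (F ^^ (s * m)) ` J"
        using covered z(2) by auto
      then obtain u w where u: "u \<in> J" "(F ^^ (s * m)) u = z" and w: "w \<in> J" "(F ^^ (s * m)) w = z/2"
        by (metis imageE)
      have "z/4 < dist ((F ^^ (s * m)) u) ((F ^^ (s * m)) w)"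
        using z(2) by (simp add: u(2) w(2) dist_real_def)
      then show "\<exists>u\<in>U. \<exists>w\<in>U. z/4 < dist ((F ^^ (s * m)) u) ((F ^^ (s * m)) w)"
        using J(1) u(1) w(1) by blast
    qed
  qed
  show thesis
    by (rule that[of s "z/4"]) (use s(1) z(2) sensitive in auto)
qed

end

lemma multi_transitive_imp_transitive_multiples:
  assumes "multi_transitive f" "N \<ge> 1" "nonempty_open U" "nonempty_open V"
  shows "\<exists>k\<ge>1. comp_seq f 1 (N * k) ` U \<inter> V \<noteq> {}"
proof -
  define Us where "Us i = (if i = N then U else unit_iv)" for i :: nat
  define Vs where "Vs i = (if i = N then V else unit_iv)" for i :: nat
  have "nonempty_open unit_iv"
    unfolding nonempty_open_def unit_iv_def by auto
  then have "\<forall>i\<in>{1..N}. nonempty_open (Us i) \<and> nonempty_open (Vs i)"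
    using assms(3,4) unfolding Us_def Vs_def by simp
  then obtain k where "k \<ge> 1" "\<forall>i\<in>{1..N}. comp_seq f 1 (i * k) ` Us i \<inter> Vs i \<noteq> {}"
    using assms(1,2) unfolding multi_transitive_def by blast
  then show ?thesis
    using assms(2) unfolding Us_def Vs_def by force
qed

lemma strongly_multi_sensitive_if_eventually_sensitive:
  assumes "q \<ge> 1" "\<delta> > 0"
    and sensitive: "\<And>U. nonempty_open U \<Longrightarrow> \<forall>\<^sub>F m in sequentially.
      \<exists>u\<in>U. \<exists>w\<in>U. \<delta> < dist (comp_seq f 1 (q * m) u) (comp_seq f 1 (q * m) w)"
  shows "strongly_multi_sensitive f"
  unfolding strongly_multi_sensitive_def multi_sensitive_def
proof (intro allI impI exI[of _ \<delta>] conjI)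
  fix r :: nat and v :: "nat \<Rightarrow> nat" and U :: "nat \<Rightarrow> real set"
  assume v: "\<forall>i\<in>{1..r}. v i \<ge> 1" and U: "\<forall>i\<in>{1..r}. nonempty_open (U i)"
  have "\<forall>\<^sub>F m in sequentially. \<forall>i\<in>{1..r}.
      \<exists>u\<in>U i. \<exists>w\<in>U i. \<delta> < dist (comp_seq f 1 (q * m) u) (comp_seq f 1 (q * m) w)"
  proof (rule eventually_ball_finite)
    show "\<forall>i\<in>{1..r}. \<forall>\<^sub>F m in sequentially.
        \<exists>u\<in>U i. \<exists>w\<in>U i. \<delta> < dist (comp_seq f 1 (q * m) u) (comp_seq f 1 (q * m) w)"
      using U sensitive by blast
  qed simp
  then obtain M where M: "\<And>m i. m \<ge> M \<Longrightarrow> i \<in> {1..r} \<Longrightarrow>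
      \<exists>u\<in>U i. \<exists>w\<in>U i. \<delta> < dist (comp_seq f 1 (q * m) u) (comp_seq f 1 (q * m) w)"
    unfolding eventually_sequentially by blast
  define n where "n = q * (M + 1)"
  have "n \<in> N_set (block_sys (v i) f) (U i) \<delta>" if i: "i \<in> {1..r}" for i
  proof -
    have "comp_seq (block_sys (v i) f) 1 n = comp_seq f 1 (q * (v i * (M + 1)))"
      unfolding comp_seq_block_sys n_def by (simp add: algebra_simps)
    moreover have "v i * (M + 1) \<ge> M"
      using v i by (metis le_add1 le_trans mult_le_mono1 mult_1)
    moreover have "n \<ge> 1"
      unfolding n_def using \<open>q \<ge> 1\<close> by simp
    ultimately show ?thesis
      unfolding N_set_def using M[OF _ i] by auto
  qed
  then show "(\<Inter>i\<in>{1..r}. N_set (block_sys (v i) f) (U i) \<delta>) \<noteq> {}"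
    by blast
qed (rule \<open>\<delta> > 0\<close>)

lemma totally_transitive_interval_map_period_map:
  assumes "cont_seq f" "multi_transitive f" "p \<ge> 1"
    and periodic: "\<And>i. i \<ge> 1 \<Longrightarrow> f (i + p) = f i"
  shows "totally_transitive_interval_map (comp_seq f 1 p)"
proof
  show "continuous_on {0..1} (comp_seq f 1 p)" "comp_seq f 1 p ` {0..1} \<subseteq> {0..1}"
    using comp_seq_continuous_self_map[OF assms(1), of 1 p] by auto
  fix N :: nat and U V
  assume "N \<ge> 1" "nonempty_open U" "nonempty_open V"
  then have "\<exists>k\<ge>1. comp_seq f 1 (p * N * k) ` U \<inter> V \<noteq> {}"
    using \<open>p \<ge> 1\<close> by (intro multi_transitive_imp_transitive_multiples[OF assms(2)]) simp_all
  then show "\<exists>k\<ge>1. (comp_seq f 1 p ^^ (N * k)) ` U \<inter> V \<noteq> {}"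
    by (simp only: mult.assoc comp_seq_mult_period[of f p, OF periodic])
qed

theorem mainTheorem3:
  fixes f :: "nat \<Rightarrow> real \<Rightarrow> real"
  assumes "cont_seq f" and "periodic_seq f" and "multi_transitive f"
  shows "strongly_multi_sensitive f"
proof -
  obtain p where p: "p \<ge> 1" and periodic: "\<And>i. i \<ge> 1 \<Longrightarrow> f (i + p) = f i"
    using periodic_seq_shift[OF assms(2)] by blast
  interpret totally_transitive_interval_map "comp_seq f 1 p"
    using assms(1,3) p periodic by (rule totally_transitive_interval_map_period_map)
  obtain s \<delta> where "s \<ge> 1" "\<delta> > 0" and sensitive: "\<And>U. nonempty_open U \<Longrightarrow>
      \<forall>\<^sub>F m in sequentially. \<exists>u\<in>U. \<exists>w\<in>U.
        \<delta> < dist ((comp_seq f 1 p ^^ (s * m)) u) ((comp_seq f 1 p ^^ (s * m)) w)"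
    using eventually_sensitive_along_multiples by blast
  show ?thesis
  proof (rule strongly_multi_sensitive_if_eventually_sensitive[of "p * s" \<delta>])
    show "p * s \<ge> 1"
      using p \<open>s \<ge> 1\<close> by simp
  qed (use \<open>\<delta> > 0\<close> sensitive in
      \<open>simp_all only: mult.assoc comp_seq_mult_period[of f p, OF periodic]\<close>)
qed

end
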